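(* Let $E=[n]$, let $f:2^E\to\mathbb{Z}_{\ge0}$ be a nonnegative integer-valued submodular function with $M:=\|f\|_\infty<\infty$, and let $d\in\mathbb{Z}^n$ be an integer direction with at least one positive entry. Let $\hat E=E\cup\{n+1\}$ and, for $C\in\mathbb{R}$, define $\hat f(\cdot;C):2^{\hat E}\to\mathbb{R}$ by \[ \hat f(S;C)=\begin{cases} f(S) & \text{if } n+1\notin S,\\ f(S\setminus\{n+1\})+C & \text{if } n+1\in S\subsetneq \hat E,\\ f(E) & \text{if } S=\hat E.\end{cases} \] Let $\hat d=(d_1,\dots,d_n,0)\in\mathbb{Z}^{n+1}$ and let $e_{n+1}$ be the $(n+1)$-st standard basis vector. If $C>M\|d\|_1$, then \[ \max\bigl\{\lambda_1:\ \lambda_1,\lambda_2\in\mathbb{R},\ \lambda_1\hat d+\lambda_2 e_{n+1}\in B(\hat f(\cdot;C))\bigr\} =\max\bigl\{\lambda\in\mathbb{R}:\ \lambda d\in P(f)\bigr\}. \]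
   Context: For a set function $g$ on a finite ground set $V$ and $x\in\mathbb{R}^V$, write $x(S)=\sum_{i\in S}x_i$. The extended polymatroid is $P(g)=\{x\in\mathbb{R}^V: x(S)\le g(S)\ \forall S\subseteq V\}$ and the base polytope is $B(g)=\{x\in P(g): x(V)=g(V)\}$. $\|d\|_1=\sum_i|d_i|$. *)

theory Defs
  imports Complex_Main
begin

text \<open>Vectors in R^V are functions nat => real; only values on V matter.\<close>

definition submodular_on :: "nat set \<Rightarrow> (nat set \<Rightarrow> int) \<Rightarrow> bool" where
  "submodular_on V f \<longleftrightarrow>
     (\<forall>S T. S \<subseteq> V \<longrightarrow> T \<subseteq> V \<longrightarrow> f (S \<union> T) + f (S \<inter> T) \<le> f S + f T)"

definition ext_polymatroid :: "nat set \<Rightarrow> (nat set \<Rightarrow> real) \<Rightarrow> (nat \<Rightarrow> real) set" where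
  "ext_polymatroid V g = {x. \<forall>S. S \<subseteq> V \<longrightarrow> (\<Sum>i\<in>S. x i) \<le> g S}"

definition base_polytope :: "nat set \<Rightarrow> (nat set \<Rightarrow> real) \<Rightarrow> (nat \<Rightarrow> real) set" where
  "base_polytope V g = {x \<in> ext_polymatroid V g. (\<Sum>i\<in>V. x i) = g V}"

definition f_hat :: "nat \<Rightarrow> (nat set \<Rightarrow> int) \<Rightarrow> real \<Rightarrow> nat set \<Rightarrow> real" where
  "f_hat n f C S =
     (if Suc n \<notin> S then real_of_int (f S)
      else if S = insert (Suc n) {1..n} then real_of_int (f {1..n})
      else real_of_int (f (S - {Suc n})) + C)"

definition d_hat :: "nat \<Rightarrow> (nat \<Rightarrow> int) \<Rightarrow> nat \<Rightarrow> real" where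
  "d_hat n d i = (if i \<in> {1..n} then real_of_int (d i) else 0)"

definition unit_vec :: "nat \<Rightarrow> nat \<Rightarrow> real" where
  "unit_vec j i = (if i = j then 1 else 0)"

definition has_max :: "real set \<Rightarrow> real \<Rightarrow> bool" where
  "has_max A m \<longleftrightarrow> m \<in> A \<and> (\<forall>x\<in>A. x \<le> m)"

end

theory Submission
  imports Defs
begin

text \<open>The largest step along \<open>d\<close> inside \<open>P(f)\<close> is \<open>m = min {f(S)/d(S) | d(S) > 0}\<close>
  (only the sets with \<open>d(S) > 0\<close> constrain a nonnegative step). In the lifted problem the
  constraints on subsets of \<open>E\<close> are those of \<open>P(f)\<close>, so no \<open>\<lambda>\<^sub>1\<close> beyond \<open>m\<close> is feasible;
  conversely \<open>\<lambda>\<^sub>1 = m\<close> together with \<open>\<lambda>\<^sub>2 = f(E) - m d(E)\<close> meets the equation on \<open>\<hat>E\<close>, and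
  the remaining constraints \<open>m d(T) + \<lambda>\<^sub>2 \<le> f(T) + C\<close> hold because \<open>m \<le> f({i})/d\<^sub>i \<le> M\<close> for
  some \<open>d\<^sub>i \<ge> 1\<close>, which bounds \<open>\<lambda>\<^sub>2\<close> by \<open>M \<parallel>d\<parallel>\<^sub>1 < C\<close>.\<close>

definition ray_bound :: "nat set \<Rightarrow> (nat set \<Rightarrow> real) \<Rightarrow> (nat \<Rightarrow> real) \<Rightarrow> real" where
  "ray_bound V g x = Min ((\<lambda>S. g S / sum x S) ` {S. S \<subseteq> V \<and> sum x S > 0})"

lemma scaled_mem_ext_polymatroid_iff:
  "(\<lambda>i. l * x i) \<in> ext_polymatroid V g \<longleftrightarrow> (\<forall>S. S \<subseteq> V \<longrightarrow> l * sum x S \<le> g S)"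
  by (simp add: ext_polymatroid_def sum_distrib_left)

lemma finite_ray_constraints: "finite V \<Longrightarrow> finite {S. S \<subseteq> V \<and> sum x S > 0}"
  by (rule finite_subset[of _ "Pow V"]) auto

lemma ray_bound_le:
  assumes "finite V" "S \<subseteq> V" "sum x S > 0"
  shows "ray_bound V g x \<le> g S / sum x S"
  unfolding ray_bound_def using assms finite_ray_constraints[OF assms(1)] by simp

lemma ray_bound_attained:
  assumes "finite V" "S\<^sub>0 \<subseteq> V" "sum x S\<^sub>0 > 0"
  obtains S where "S \<subseteq> V" "sum x S > 0" "ray_bound V g x = g S / sum x S"
proof -
  have "ray_bound V g x \<in> (\<lambda>S. g S / sum x S) ` {S. S \<subseteq> V \<and> sum x S > 0}"
    unfolding ray_bound_def using assms finite_ray_constraints[OF assms(1)] by (intro Min_in) auto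
  then show thesis using that by blast
qed

lemma ray_bound_nonneg:
  assumes "finite V" "S\<^sub>0 \<subseteq> V" "sum x S\<^sub>0 > 0" "\<forall>S. S \<subseteq> V \<longrightarrow> g S \<ge> 0"
  shows "ray_bound V g x \<ge> 0"
  using assms by (metis ray_bound_attained divide_nonneg_pos)

lemma ray_bound_le_singleton:
  assumes "finite V" "i \<in> V" "x i \<ge> 1" "g {i} \<ge> 0"
  shows "ray_bound V g x \<le> g {i}"
proof -
  have "ray_bound V g x \<le> g {i} / x i"
    using ray_bound_le[of V "{i}" x g] assms by simp
  also have "\<dots> \<le> g {i}"
    using assms(3,4) by (simp add: divide_le_eq mult_le_cancel_left1)
  finally show ?thesis .
qed

lemma has_max_ray_bound:
  assumes "finite V" "S\<^sub>0 \<subseteq> V" "sum x S\<^sub>0 > 0" and nonneg: "\<forall>S. S \<subseteq> V \<longrightarrow> g S \<ge> 0"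
  shows "has_max {l. (\<lambda>i. l * x i) \<in> ext_polymatroid V g} (ray_bound V g x)"
  unfolding has_max_def scaled_mem_ext_polymatroid_iff
proof (intro conjI ballI CollectI allI impI)
  fix S assume S: "S \<subseteq> V"
  show "ray_bound V g x * sum x S \<le> g S"
  proof (cases "sum x S > 0")
    case True
    then show ?thesis using ray_bound_le[OF assms(1) S True] by (simp add: pos_le_divide_eq)
  next
    case False
    then have "ray_bound V g x * sum x S \<le> 0"
      using ray_bound_nonneg[OF assms] by (simp add: mult_nonneg_nonpos)
    then show ?thesis using nonneg S by (meson order_trans)
  qed
next
  fix l assume "l \<in> {l. \<forall>S. S \<subseteq> V \<longrightarrow> l * sum x S \<le> g S}"
  then have l: "l * sum x S \<le> g S" if "S \<subseteq> V" for S using that by blast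
  obtain S where "S \<subseteq> V" "sum x S > 0" "ray_bound V g x = g S / sum x S"
    using ray_bound_attained[OF assms(1-3)] .
  then show "l \<le> ray_bound V g x" using l by (simp add: pos_le_divide_eq)
qed

text \<open>Integrality of \<open>d\<close> enters here: an entry \<open>x\<^sub>i \<ge> 1\<close> absorbs the single \<open>M\<close> coming from \<open>g(V)\<close>.\<close>

lemma top_slack_le:
  fixes x :: "'a \<Rightarrow> real"
  assumes "finite V" "i \<in> V" "x i \<ge> 1" "0 \<le> l" "l \<le> M" "gV \<le> M"
  shows "gV - l * sum x V \<le> M * (\<Sum>j\<in>V. \<bar>x j\<bar>)"
proof -
  define R where "R = (\<Sum>j\<in>V - {i}. \<bar>x j\<bar>)"
  have sum_x: "sum x V = x i + sum x (V - {i})"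
    using sum.remove[OF assms(1,2)] .
  have "\<bar>x i\<bar> = x i" using assms(3) by simp
  then have sum_abs: "(\<Sum>j\<in>V. \<bar>x j\<bar>) = x i + R"
    using sum.remove[OF assms(1,2), of "\<lambda>j. \<bar>x j\<bar>"] by (simp add: R_def)
  have "- sum x (V - {i}) \<le> R"
    unfolding R_def by (simp add: sum_negf[symmetric] sum_mono)
  then have "- l * sum x (V - {i}) \<le> l * R"
    using mult_left_mono[OF _ assms(4)] by fastforce
  moreover have "(M - l) * R \<ge> 0" "M * (x i - 1) \<ge> 0" "l * x i \<ge> 0"
    using assms by (auto simp: R_def sum_nonneg)
  ultimately show ?thesis
    using sum_x sum_abs assms(6) by (simp add: algebra_simps)
qed

lemma sum_lifted_direction_subset:
  assumes "S \<subseteq> {1..n}"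
  shows "(\<Sum>i\<in>S. l1 * d_hat n d i + l2 * unit_vec (Suc n) i) = l1 * (\<Sum>i\<in>S. real_of_int (d i))"
proof -
  have "(\<Sum>i\<in>S. l1 * d_hat n d i + l2 * unit_vec (Suc n) i) = (\<Sum>i\<in>S. l1 * real_of_int (d i))"
    by (rule sum.cong) (use assms in \<open>auto simp: d_hat_def unit_vec_def\<close>)
  then show ?thesis by (simp add: sum_distrib_left)
qed

lemma sum_lifted_direction_insert:
  assumes "S \<subseteq> insert (Suc n) {1..n}" "Suc n \<in> S"
  shows "(\<Sum>i\<in>S. l1 * d_hat n d i + l2 * unit_vec (Suc n) i)
     = l1 * (\<Sum>i\<in>S - {Suc n}. real_of_int (d i)) + l2"
proof -
  have "finite S" using assms(1) finite_subset by blast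
  from sum.remove[OF this assms(2)] have "(\<Sum>i\<in>S. l1 * d_hat n d i + l2 * unit_vec (Suc n) i)
     = (l1 * d_hat n d (Suc n) + l2 * unit_vec (Suc n) (Suc n)) +
       (\<Sum>i\<in>S - {Suc n}. l1 * d_hat n d i + l2 * unit_vec (Suc n) i)" .
  also have "(\<Sum>i\<in>S - {Suc n}. l1 * d_hat n d i + l2 * unit_vec (Suc n) i)
      = l1 * (\<Sum>i\<in>S - {Suc n}. real_of_int (d i))"
    using assms by (intro sum_lifted_direction_subset) auto
  finally show ?thesis by (simp add: d_hat_def unit_vec_def)
qed

lemma lifted_mem_base_polytope_imp_scaled_mem:
  assumes "(\<lambda>i. l1 * d_hat n d i + l2 * unit_vec (Suc n) i)
             \<in> base_polytope (insert (Suc n) {1..n}) (f_hat n f C)"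
  shows "(\<lambda>i. l1 * real_of_int (d i)) \<in> ext_polymatroid {1..n} (\<lambda>S. real_of_int (f S))"
  unfolding scaled_mem_ext_polymatroid_iff
proof (intro allI impI)
  fix S assume S: "S \<subseteq> {1..n}"
  then have "(\<Sum>i\<in>S. l1 * d_hat n d i + l2 * unit_vec (Suc n) i) \<le> f_hat n f C S"
    using assms by (auto simp: base_polytope_def ext_polymatroid_def)
  moreover have "Suc n \<notin> S" using S by auto
  ultimately show "l1 * (\<Sum>i\<in>S. real_of_int (d i)) \<le> real_of_int (f S)"
    using sum_lifted_direction_subset[OF S] by (simp add: f_hat_def)
qed

lemma scaled_mem_imp_lifted_mem_base_polytope:
  assumes scaled: "(\<lambda>i. l * real_of_int (d i)) \<in> ext_polymatroid {1..n} (\<lambda>S. real_of_int (f S))"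
    and slack: "real_of_int (f {1..n}) - l * (\<Sum>i\<in>{1..n}. real_of_int (d i)) \<le> C"
  defines "l2 \<equiv> real_of_int (f {1..n}) - l * (\<Sum>i\<in>{1..n}. real_of_int (d i))"
  shows "(\<lambda>i. l * d_hat n d i + l2 * unit_vec (Suc n) i)
           \<in> base_polytope (insert (Suc n) {1..n}) (f_hat n f C)"
proof -
  let ?E = "{1..n}" and ?x = "\<lambda>i. l * d_hat n d i + l2 * unit_vec (Suc n) i"
  have whole: "sum ?x (insert (Suc n) ?E) = real_of_int (f ?E)"
    using sum_lifted_direction_insert[of "insert (Suc n) ?E" n l d l2] by (simp add: l2_def)
  have "sum ?x S \<le> f_hat n f C S" if S: "S \<subseteq> insert (Suc n) ?E" for S
  proof (cases "Suc n \<in> S")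
    case False
    then have "S \<subseteq> ?E" using S by auto
    then show ?thesis
      using scaled False sum_lifted_direction_subset[of S n l d l2]
      by (simp add: scaled_mem_ext_polymatroid_iff f_hat_def)
  next
    case True
    have T: "S - {Suc n} \<subseteq> ?E" using S by auto
    show ?thesis
    proof (cases "S = insert (Suc n) ?E")
      case True
      then show ?thesis using whole by (simp add: f_hat_def)
    next
      case False
      have "sum ?x S = l * (\<Sum>i\<in>S - {Suc n}. real_of_int (d i)) + l2"
        using sum_lifted_direction_insert[OF S True] .
      also have "\<dots> \<le> real_of_int (f (S - {Suc n})) + C"
        using scaled T slack unfolding scaled_mem_ext_polymatroid_iff l2_def
        by (meson add_mono)
      finally show ?thesis using True False by (simp add: f_hat_def)
    qed
  qed
  with whole show ?thesis
    unfolding base_polytope_def ext_polymatroid_def by (simp add: f_hat_def)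
qed

theorem lemma3:
  fixes n :: nat and f :: "nat set \<Rightarrow> int" and d :: "nat \<Rightarrow> int" and C :: real
  assumes nonneg: "\<forall>S. S \<subseteq> {1..n} \<longrightarrow> f S \<ge> 0"
    and submod: "submodular_on {1..n} f"
    and pos: "\<exists>i\<in>{1..n}. d i > 0"
    and C: "C > real_of_int (Max (f ` Pow {1..n})) * real_of_int (\<Sum>i\<in>{1..n}. \<bar>d i\<bar>)"
  shows "\<exists>m. has_max {l1. \<exists>l2. (\<lambda>i. l1 * d_hat n d i + l2 * unit_vec (Suc n) i)
                        \<in> base_polytope (insert (Suc n) {1..n}) (f_hat n f C)} m
           \<and> has_max {l. (\<lambda>i. l * real_of_int (d i)) \<in> ext_polymatroid {1..n} (\<lambda>S. real_of_int (f S))} m"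
proof -
  let ?E = "{1..n}" and ?x = "\<lambda>i. real_of_int (d i)" and ?g = "\<lambda>S. real_of_int (f S)"
  let ?M = "real_of_int (Max (f ` Pow ?E))"
  define m where "m = ray_bound ?E ?g ?x"
  obtain i where i: "i \<in> ?E" "d i \<ge> 1" using pos by auto
  have g_le_M: "?g S \<le> ?M" if "S \<subseteq> ?E" for S using that by simp
  have ray: "has_max {l. (\<lambda>i. l * ?x i) \<in> ext_polymatroid ?E ?g} m"
    unfolding m_def using i nonneg by (intro has_max_ray_bound[of _ "{i}"]) auto
  have m_nonneg: "0 \<le> m"
    unfolding m_def using i nonneg by (intro ray_bound_nonneg[of _ "{i}"]) auto
  have "m \<le> ?g {i}"
    unfolding m_def using i nonneg by (intro ray_bound_le_singleton) auto
  also have "?g {i} \<le> ?M" using i(1) by (intro g_le_M) auto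
  finally have "?g ?E - m * sum ?x ?E \<le> ?M * (\<Sum>j\<in>?E. \<bar>?x j\<bar>)"
    using i m_nonneg by (intro top_slack_le) auto
  with C have slack: "?g ?E - m * sum ?x ?E \<le> C" by simp
  have "m \<in> {l1. \<exists>l2. (\<lambda>i. l1 * d_hat n d i + l2 * unit_vec (Suc n) i)
                        \<in> base_polytope (insert (Suc n) ?E) (f_hat n f C)}"
    using scaled_mem_imp_lifted_mem_base_polytope[where d = d and f = f, OF _ slack] ray
    by (auto simp: has_max_def)
  moreover have "l1 \<le> m"
    if "(\<lambda>i. l1 * d_hat n d i + l2 * unit_vec (Suc n) i)
          \<in> base_polytope (insert (Suc n) ?E) (f_hat n f C)" for l1 l2
    using lifted_mem_base_polytope_imp_scaled_mem[OF that] ray unfolding has_max_def by blast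
  ultimately show ?thesis
    using ray unfolding has_max_def by blast
qed

end
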